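(* Let $(\mathcal{S},d,\mathcal{C})$ be a complete uniformly convex hyperbolic space with a monotone modulus of uniform convexity $\eta$, let $\mathcal{A}\neq\emptyset$ be a closed convex subset of $\mathcal{S}$, and let $T:\mathcal{A}\to\mathcal{A}$ be a mean nonexpansive mapping with constants $a,b\ge0$, $a+b\le1$, $b<1$, such that $\mathcal{F}(T)\neq\emptyset$. Let $\{\alpha_n\}\subset[0,1]$, $\{r_n\}\subset[0,\infty)$, $x_0\in\mathcal{A}$, and let $\{x_n\}$ be generated by $$\omega_n=\mathcal{C}\Big(x_n,\,Tx_n,\,\tfrac{1}{r_n+1}\Big),\qquad x_{n+1}=\mathcal{C}\big(x_n,\,T\omega_n,\,\alpha_n\big),\qquad n\ge0.$$ Then $\{x_n\}$ converges (in the metric $d$) to a fixed point of $T$ if and only if $\liminf_{n\to\infty}d(x_n,\mathcal{F}(T))=0$, where $d(x,\mathcal{F}(T))=\inf\{d(x,z^* ):z^*\in\mathcal{F}(T)\}$.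
   Context: A hyperbolic space $(\mathcal{S},d,\mathcal{C})$ is a metric space $(\mathcal{S},d)$ with a map $\mathcal{C}:\mathcal{S}\times\mathcal{S}\times[0,1]\to\mathcal{S}$ such that for all $x,y,z,w,v\in\mathcal{S}$ and $\lambda,\mu\in[0,1]$: (i) $d(v,\mathcal{C}(x,y,\lambda))\le(1-\lambda)d(v,x)+\lambda d(v,y)$; (ii) $d(\mathcal{C}(x,y,\lambda),\mathcal{C}(x,y,\mu))=|\lambda-\mu|\,d(x,y)$; (iii) $\mathcal{C}(x,y,\lambda)=\mathcal{C}(y,x,1-\lambda)$; (iv) $d(\mathcal{C}(x,z,\lambda),\mathcal{C}(y,w,\lambda))\le(1-\lambda)d(x,y)+\lambda d(z,w)$. (In a normed space, $\mathcal{C}(x,y,\lambda)=(1-\lambda)x+\lambda y$.) A subset $\mathcal{A}$ is convex if $\mathcal{C}(x,y,\lambda)\in\mathcal{A}$ for all $x,y\in\mathcal{A}$, $\lambda\in[0,1]$. The space is uniformly convex if for every $r>0$ and $\epsilon\in(0,2]$ there is $\delta\in(0,1]$ such that for all $x,y,z\in\mathcal{S}$ with $d(x,z)\le r$, $d(y,z)\le r$, $d(x,y)\ge\epsilon r$ one has $d(\mathcal{C}(x,y,\tfrac12),z)\le(1-\delta)r$; a map $\eta:(0,\infty)\times(0,2]\to(0,1]$ giving such a $\delta=\eta(r,\epsilon)$ is a modulus of uniform convexity, and it is monotone if it is nonincreasing in $r$ for each fixed $\epsilon$. A mapping $T:\mathcal{A}\to\mathcal{A}$ is mean nonexpansive if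 there are constants $a,b\ge0$ with $a+b\le1$ such that $d(Tx,Ty)\le a\,d(x,y)+b\,d(x,Ty)$ for all $x,y\in\mathcal{A}$; $\mathcal{F}(T)$ denotes its set of fixed points. *)

theory Defs
  imports "HOL-Analysis.Analysis" "HOL-Library.Liminf_Limsup"
begin

text \<open>Hyperbolic space structure (Kohlenbach) on a metric space type, with the map C.\<close>
definition hyperbolic_space :: "('a::metric_space \<Rightarrow> 'a \<Rightarrow> real \<Rightarrow> 'a) \<Rightarrow> bool" where
  "hyperbolic_space C \<longleftrightarrow>
     (\<forall>x y z w v l m. l \<in> {0..1} \<and> m \<in> {0..1} \<longrightarrow>
        dist v (C x y l) \<le> (1 - l) * dist v x + l * dist v y \<and>
        dist (C x y l) (C x y m) = \<bar>l - m\<bar> * dist x y \<and>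
        C x y l = C y x (1 - l) \<and>
        dist (C x z l) (C y w l) \<le> (1 - l) * dist x y + l * dist z w)"

definition hyp_convex :: "('a \<Rightarrow> 'a \<Rightarrow> real \<Rightarrow> 'a) \<Rightarrow> 'a set \<Rightarrow> bool" where
  "hyp_convex C A \<longleftrightarrow> (\<forall>x\<in>A. \<forall>y\<in>A. \<forall>l\<in>{0..1}. C x y l \<in> A)"

definition modulus_uc :: "('a::metric_space \<Rightarrow> 'a \<Rightarrow> real \<Rightarrow> 'a) \<Rightarrow> (real \<Rightarrow> real \<Rightarrow> real) \<Rightarrow> bool" where
  "modulus_uc C \<eta> \<longleftrightarrow>
     (\<forall>r>0. \<forall>\<epsilon>\<in>{0<..2}. \<eta> r \<epsilon> \<in> {0<..1} \<and>
        (\<forall>x y z. dist x z \<le> r \<and> dist y z \<le> r \<and> dist x y \<ge> \<epsilon> * r \<longrightarrow>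
            dist (C x y (1/2)) z \<le> (1 - \<eta> r \<epsilon>) * r))"

definition monotone_modulus_uc :: "('a::metric_space \<Rightarrow> 'a \<Rightarrow> real \<Rightarrow> 'a) \<Rightarrow> (real \<Rightarrow> real \<Rightarrow> real) \<Rightarrow> bool" where
  "monotone_modulus_uc C \<eta> \<longleftrightarrow> modulus_uc C \<eta> \<and>
     (\<forall>\<epsilon>\<in>{0<..2}. \<forall>r s. 0 < r \<and> r \<le> s \<longrightarrow> \<eta> s \<epsilon> \<le> \<eta> r \<epsilon>)"

definition mean_nonexpansive_with :: "'a::metric_space set \<Rightarrow> ('a \<Rightarrow> 'a) \<Rightarrow> real \<Rightarrow> real \<Rightarrow> bool" where
  "mean_nonexpansive_with A T a b \<longleftrightarrow> T ` A \<subseteq> A \<and> a \<ge> 0 \<and> b \<ge> 0 \<and> a + b \<le> 1 \<and>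
     (\<forall>x\<in>A. \<forall>y\<in>A. dist (T x) (T y) \<le> a * dist x y + b * dist x (T y))"

definition fixed_points :: "'a set \<Rightarrow> ('a \<Rightarrow> 'a) \<Rightarrow> 'a set" where
  "fixed_points A T = {x\<in>A. T x = x}"

end

theory Submission
  imports Defs
begin

text \<open>The iteration is Fejer monotone with respect to the fixed point set \<open>F\<close>: since \<open>T\<close> is
  quasi-nonexpansive and the convex combinations of a hyperbolic space do not increase the
  distance to a point, \<open>d(x\<^sub>n\<^sub>+\<^sub>1, p) \<le> d(x\<^sub>n, p)\<close> for every \<open>p \<in> F\<close>. Hence \<open>d(x\<^sub>n, F)\<close> is
  decreasing, so its liminf is its limit; if that limit is \<open>0\<close>, Fejer monotonicity makes
  \<open>x\<^sub>n\<close> Cauchy, and its limit lies in \<open>F\<close> because \<open>F\<close> is closed (here \<open>b < 1\<close> is used).\<close>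

lemma infdist_lessE:
  assumes "F \<noteq> {}" "infdist y F < e"
  obtains p where "p \<in> F" "dist y p < e"
proof -
  have "(INF p\<in>F. dist y p) < e" using assms by (simp add: infdist_notempty)
  then show ?thesis
    using cINF_less_iff[of F "\<lambda>p. dist y p" e] assms(1) that
    by (auto intro: bdd_belowI2[where m=0])
qed

lemma decseq_liminf_ereal_eq_0_iff:
  fixes D :: "nat \<Rightarrow> real"
  assumes "decseq D" "\<And>n. 0 \<le> D n"
  shows "liminf (\<lambda>n. ereal (D n)) = 0 \<longleftrightarrow> D \<longlonglongrightarrow> 0"
proof -
  obtain L where L: "D \<longlonglongrightarrow> L"
    using decseq_convergent[of D 0] assms by blast
  then have "liminf (\<lambda>n. ereal (D n)) = ereal L"
    by (intro lim_imp_Liminf tendsto_ereal) simp_all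
  with L show ?thesis
    by (metis LIMSEQ_unique ereal_eq_0(1))
qed

definition fejer_monotone :: "'a::metric_space set \<Rightarrow> (nat \<Rightarrow> 'a) \<Rightarrow> bool" where
  "fejer_monotone F x \<longleftrightarrow> (\<forall>p\<in>F. \<forall>n. dist (x (Suc n)) p \<le> dist (x n) p)"

lemma fejer_monotone_dist_mono:
  assumes "fejer_monotone F x" "p \<in> F" "n \<le> m"
  shows "dist (x m) p \<le> dist (x n) p"
  using assms(3)
proof (induction m rule: dec_induct)
  case (step m)
  then show ?case
    using assms(1,2) unfolding fejer_monotone_def by (meson order_trans)
qed simp

lemma fejer_monotone_infdist_decseq:
  assumes "fejer_monotone F x" "F \<noteq> {}"
  shows "decseq (\<lambda>n. infdist (x n) F)"
proof (rule decseq_SucI)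
  fix n
  have "infdist (x (Suc n)) F \<le> dist (x n) p" if "p \<in> F" for p
    using infdist_le[OF that] assms(1) that unfolding fejer_monotone_def by (meson order_trans)
  then show "infdist (x (Suc n)) F \<le> infdist (x n) F"
    unfolding infdist_notempty[OF assms(2), of "x n"] by (intro cINF_greatest assms(2))
qed

lemma fejer_monotone_Cauchy:
  assumes "fejer_monotone F x" "F \<noteq> {}" "(\<lambda>n. infdist (x n) F) \<longlonglongrightarrow> 0"
  shows "Cauchy x"
proof (rule metric_CauchyI)
  fix e :: real
  assume "e > 0"
  then obtain N where "\<forall>n\<ge>N. dist (infdist (x n) F) 0 < e / 2"
    using metric_LIMSEQ_D[OF assms(3), of "e / 2"] by auto
  then have "dist (infdist (x N) F) 0 < e / 2" by blast
  then have "infdist (x N) F < e / 2" by (simp add: abs_of_nonneg infdist_nonneg)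
  then obtain p where p: "p \<in> F" "dist (x N) p < e / 2"
    using infdist_lessE[OF assms(2)] by blast
  have "dist (x m) (x n) < e" if "N \<le> m" "N \<le> n" for m n
    using fejer_monotone_dist_mono[OF assms(1) p(1) that(1)]
      fejer_monotone_dist_mono[OF assms(1) p(1) that(2)] p(2) dist_triangle2[of "x m" "x n" p]
    by linarith
  then show "\<exists>M. \<forall>m\<ge>M. \<forall>n\<ge>M. dist (x m) (x n) < e" by blast
qed

theorem fejer_monotone_convergent_iff_liminf_infdist:
  fixes x :: "nat \<Rightarrow> 'a::complete_space"
  assumes "fejer_monotone F x" "closed F" "F \<noteq> {}"
  shows "(\<exists>p\<in>F. x \<longlonglongrightarrow> p) \<longleftrightarrow> liminf (\<lambda>n. ereal (infdist (x n) F)) = 0"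
proof -
  have "(\<exists>p\<in>F. x \<longlonglongrightarrow> p) \<longleftrightarrow> (\<lambda>n. infdist (x n) F) \<longlonglongrightarrow> 0"
  proof
    assume "\<exists>p\<in>F. x \<longlonglongrightarrow> p"
    then obtain p where "p \<in> F" "x \<longlonglongrightarrow> p" by blast
    then show "(\<lambda>n. infdist (x n) F) \<longlonglongrightarrow> 0"
      using tendsto_infdist[OF \<open>x \<longlonglongrightarrow> p\<close>, of F] by simp
  next
    assume D0: "(\<lambda>n. infdist (x n) F) \<longlonglongrightarrow> 0"
    obtain q where q: "x \<longlonglongrightarrow> q"
      using Cauchy_convergent[OF fejer_monotone_Cauchy[OF assms(1,3) D0]]
      unfolding convergent_def by blast
    then have "infdist q F = 0"
      using LIMSEQ_unique[OF tendsto_infdist[OF q] D0] by simp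
    with q show "\<exists>p\<in>F. x \<longlonglongrightarrow> p"
      using in_closed_iff_infdist_zero[OF assms(2,3)] by blast
  qed
  also have "\<dots> \<longleftrightarrow> liminf (\<lambda>n. ereal (infdist (x n) F)) = 0"
    by (rule decseq_liminf_ereal_eq_0_iff[symmetric])
      (simp_all add: fejer_monotone_infdist_decseq[OF assms(1,3)] infdist_nonneg)
  finally show ?thesis .
qed

lemma hyperbolic_space_dist_combination_le:
  assumes "hyperbolic_space C" "l \<in> {0..1}" "dist p w \<le> dist p u"
  shows "dist p (C u w l) \<le> dist p u"
proof -
  have "dist p (C u w l) \<le> (1 - l) * dist p u + l * dist p w"
    using assms(1,2) unfolding hyperbolic_space_def by blast
  also have "\<dots> \<le> (1 - l) * dist p u + l * dist p u"
    using assms(2,3) by (intro add_left_mono mult_left_mono) auto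
  finally show ?thesis by (simp add: algebra_simps)
qed

lemma mean_nonexpansive_withD:
  assumes "mean_nonexpansive_with A T a b"
  shows "T ` A \<subseteq> A" "0 \<le> a" "0 \<le> b" "a + b \<le> 1"
    and "u \<in> A \<Longrightarrow> v \<in> A \<Longrightarrow> dist (T u) (T v) \<le> a * dist u v + b * dist u (T v)"
  using assms unfolding mean_nonexpansive_with_def by blast+

lemma mean_nonexpansive_dist_fixed_point_le:
  assumes "mean_nonexpansive_with A T a b" "p \<in> fixed_points A T" "y \<in> A"
  shows "dist p (T y) \<le> dist p y"
proof -
  have p: "p \<in> A" "T p = p" using assms(2) unfolding fixed_points_def by auto
  have "dist (T y) (T p) \<le> a * dist y p + b * dist y (T p)"
    using mean_nonexpansive_withD(5)[OF assms(1,3) p(1)] .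
  also have "\<dots> = (a + b) * dist y p" using p(2) by (simp add: algebra_simps)
  also have "\<dots> \<le> dist y p"
    by (intro mult_left_le_one_le zero_le_dist add_nonneg_nonneg mean_nonexpansive_withD(2-4)[OF assms(1)])
  finally show ?thesis using p(2) by (simp add: dist_commute)
qed

lemma closed_fixed_points_mean_nonexpansive:
  assumes "mean_nonexpansive_with A T a b" "b < 1" "closed A"
  shows "closed (fixed_points A T)"
proof (rule closed_sequential_limits[THEN iffD2], intro allI impI, elim conjE)
  fix s q
  assume sF: "\<forall>n. s n \<in> fixed_points A T" and sq: "s \<longlonglongrightarrow> q"
  have s: "s n \<in> A" "T (s n) = s n" for n using sF unfolding fixed_points_def by auto
  have qA: "q \<in> A" using closed_sequentially[OF assms(3) _ sq] s(1) by blast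
  have bound: "dist (s n) (T q) \<le> a * dist (s n) q / (1 - b)" for n
  proof -
    have "dist (s n) (T q) \<le> a * dist (s n) q + b * dist (s n) (T q)"
      using mean_nonexpansive_withD(5)[OF assms(1) s(1) qA] s(2) by simp
    then have "(1 - b) * dist (s n) (T q) \<le> a * dist (s n) q" by (simp add: algebra_simps)
    then show ?thesis using assms(2) by (subst pos_le_divide_eq) (simp_all add: mult.commute)
  qed
  have "(\<lambda>n. a * dist (s n) q / (1 - b)) \<longlonglongrightarrow> 0"
    using tendsto_divide_zero[OF tendsto_mult_right_zero[OF tendsto_dist_iff[THEN iffD1, OF sq]]] .
  then have "(\<lambda>n. dist (s n) (T q)) \<longlonglongrightarrow> 0"
    by (rule tendsto_sandwich[OF always_eventually always_eventually tendsto_const, rotated 2])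
      (simp_all add: bound)
  then have "s \<longlonglongrightarrow> T q" by (rule tendsto_dist_iff[THEN iffD2])
  then have "T q = q" by (rule LIMSEQ_unique[OF sq, symmetric])
  with qA show "q \<in> fixed_points A T" unfolding fixed_points_def by simp
qed

context
  fixes C :: "'a::metric_space \<Rightarrow> 'a \<Rightarrow> real \<Rightarrow> 'a" and A F :: "'a set" and T :: "'a \<Rightarrow> 'a"
    and \<beta> \<alpha> :: "nat \<Rightarrow> real" and x :: "nat \<Rightarrow> 'a"
  assumes hyp: "hyperbolic_space C" and conv: "hyp_convex C A" and TA: "T ` A \<subseteq> A"
    and \<beta>: "\<And>n. \<beta> n \<in> {0..1}" and \<alpha>: "\<And>n. \<alpha> n \<in> {0..1}"
    and x_0: "x 0 \<in> A" and x_Suc: "\<And>n. x (Suc n) = C (x n) (T (C (x n) (T (x n)) (\<beta> n))) (\<alpha> n)"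
begin

lemma two_step_iteration_in_domain:
  "x n \<in> A \<and> C (x n) (T (x n)) (\<beta> n) \<in> A"
proof -
  have step: "C u (T u) (\<beta> n) \<in> A" if "u \<in> A" for u n
    using conv TA \<beta> that unfolding hyp_convex_def by blast
  have "x n \<in> A"
  proof (induction n)
    case (Suc n)
    then show ?case
      using conv TA \<alpha> step[OF Suc] unfolding x_Suc hyp_convex_def by blast
  qed (rule x_0)
  then show ?thesis using step by blast
qed

lemma two_step_iteration_fejer_monotone:
  assumes quasi: "\<And>p y. p \<in> F \<Longrightarrow> y \<in> A \<Longrightarrow> dist p (T y) \<le> dist p y"
  shows "fejer_monotone F x"
  unfolding fejer_monotone_def
proof (intro ballI allI)
  fix p n
  assume p: "p \<in> F"
  let ?\<omega> = "C (x n) (T (x n)) (\<beta> n)"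
  have "dist p ?\<omega> \<le> dist p (x n)"
    using hyperbolic_space_dist_combination_le[OF hyp \<beta>] quasi[OF p] two_step_iteration_in_domain by blast
  then have "dist p (T ?\<omega>) \<le> dist p (x n)"
    using quasi[OF p] two_step_iteration_in_domain order_trans by blast
  then have "dist p (x (Suc n)) \<le> dist p (x n)"
    unfolding x_Suc by (rule hyperbolic_space_dist_combination_le[OF hyp \<alpha>])
  then show "dist (x (Suc n)) p \<le> dist (x n) p" by (simp add: dist_commute)
qed

end

theorem theorem4:
  fixes C :: "'a::complete_space \<Rightarrow> 'a \<Rightarrow> real \<Rightarrow> 'a"
    and \<eta> :: "real \<Rightarrow> real \<Rightarrow> real"
    and A :: "'a set" and T :: "'a \<Rightarrow> 'a" and a b :: real
    and \<alpha> r :: "nat \<Rightarrow> real" and x \<omega> :: "nat \<Rightarrow> 'a" and x0 :: 'a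
  assumes hyp: "hyperbolic_space C"
    and uc: "monotone_modulus_uc C \<eta>"
    and A_ne: "A \<noteq> {}" and A_closed: "closed A" and A_conv: "hyp_convex C A"
    and T_mne: "mean_nonexpansive_with A T a b" and b_lt: "b < 1"
    and F_ne: "fixed_points A T \<noteq> {}"
    and alpha: "\<And>n. \<alpha> n \<in> {0..1}"
    and r_nonneg: "\<And>n. r n \<ge> 0"
    and x0A: "x0 \<in> A" and x_0: "x 0 = x0"
    and omega: "\<And>n. \<omega> n = C (x n) (T (x n)) (1 / (r n + 1))"
    and x_Suc: "\<And>n. x (Suc n) = C (x n) (T (\<omega> n)) (\<alpha> n)"
  shows "(\<exists>p\<in>fixed_points A T. x \<longlonglongrightarrow> p) \<longleftrightarrow>
         liminf (\<lambda>n. ereal (infdist (x n) (fixed_points A T))) = 0"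
proof (rule fejer_monotone_convergent_iff_liminf_infdist)
  have step_size: "1 / (r n + 1) \<in> {0..1}" for n using r_nonneg[of n] by simp
  show "fejer_monotone (fixed_points A T) x"
  proof (rule two_step_iteration_fejer_monotone[OF hyp A_conv mean_nonexpansive_withD(1)[OF T_mne]
        step_size alpha])
    show "x 0 \<in> A" using x0A x_0 by simp
    show "x (Suc n) = C (x n) (T (C (x n) (T (x n)) (1 / (r n + 1)))) (\<alpha> n)" for n
      using x_Suc omega by simp
  qed (rule mean_nonexpansive_dist_fixed_point_le[OF T_mne])
  show "closed (fixed_points A T)"
    using closed_fixed_points_mean_nonexpansive[OF T_mne b_lt A_closed] .
qed (rule F_ne)

end
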